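(* Let $x\in\{\ell,r\}$ and $w\in\mathcal{A}^*$. Let $(\mathfrak{d}^x_1(w),\dots,\mathfrak{d}^x_k(w))$ be the $x$-left-to-right minimal subsequence of $w$, and let $c_1,\dots,c_j$ be the words obtained by reading the columns of the tableau $\mathfrak{R}_x(w)$ from left to right, each column read from top to bottom. Then $k=j$ and $\mathfrak{d}^x_i(w)=c_i$ for all $i\in\{1,\dots,k\}$.
   Context: Let $\mathcal{A}=\{1<2<3<\cdots\}$ be the positive integers viewed as a totally ordered alphabet. An lPS tableau is a finite (possibly empty) sequence of nonempty bottom-justified columns of boxes filled with elements of $\mathcal{A}$, such that the entries of each column are strictly decreasing from top to bottom and the bottom entries of the columns form a weakly increasing sequence from left to right. An rPS tableau is defined in the same way but with columns weakly decreasing from top to bottom and the bottom row strictly increasing from left to right. Right insertion of a symbol $a$ into an lPS tableau $B$: if $a$ is greater than or equal to every entry of the bottom row, append a new column consisting of $a$ at the right end; otherwise, let $z$ be the leftmost bottom-row entry with $z>a$ and put $a$ in a new box at the bottom of the column of $z$ (the previous entries of that column move up one box). Right insertion into an rPS tableau is the same except that a new column is created iff $a$ is strictly greater than every bottom-row entry, and otherwise $z$ is the leftmost bottom-row entry with $z\geq a$. For a word $w=w_1\cdots w_k$, $\mathfrak{R}_\ell(w)$ (resp. $\mathfrak{R}_r(w)$) is obtained by starting with the empty lPS (resp. rPS) tableau and right-inserting $w_1,\dots,w_k$ in order. Decreasing subsequence: for a nonempty word $w$, $\mathfrak{d}^\ell(w)$ (resp. $\mathfrak{d}^r(w)$) is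 the subsequence of $w$ whose first symbol is the first symbol of $w$, and whose $(i+1)$-th symbol is the first symbol of $w$ located to the right of (the occurrence of) the $i$-th symbol that is strictly less than (resp. less than or equal to) it; the process stops when no such symbol exists. For the empty word it is empty. Left-to-right minimal subsequence: $\mathfrak{d}^x_1(w)=\mathfrak{d}^x(w)$, and for $i\geq2$, $\mathfrak{d}^x_i(w)=\mathfrak{d}^x(w_{(i)})$, where $w_{(i)}$ is obtained from $w$ by deleting the occurrences (positions) used in $\mathfrak{d}^x_1(w),\dots,\mathfrak{d}^x_{i-1}(w)$; the $x$-left-to-right minimal subsequence of $w$ is the sequence of the nonempty words $\mathfrak{d}^x_1(w),\dots,\mathfrak{d}^x_k(w)$ so obtained. *)

theory Defs
  imports Main
begin

text \<open>Alphabet: positive integers, represented by nat with all letters \<ge> 1.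
 Side L = lPS/left convention, R = rPS/right convention.\<close>

datatype side = L | R

fun rel :: "side \<Rightarrow> nat \<Rightarrow> nat \<Rightarrow> bool" where
  "rel L a b = (a < b)"
| "rel R a b = (a \<le> b)"

text \<open>A tableau is a list of columns (left to right); each column is a nonempty list
 of entries read from top to bottom, so the bottom entry is the last element.\<close>
type_synonym tableau = "nat list list"

fun ins_cols :: "side \<Rightarrow> nat \<Rightarrow> tableau \<Rightarrow> tableau" where
  "ins_cols x a [] = [[a]]"
| "ins_cols x a (c # cs) =
     (if rel x a (last c) then (c @ [a]) # cs else c # ins_cols x a cs)"

definition right_insert :: "side \<Rightarrow> tableau \<Rightarrow> nat \<Rightarrow> tableau" where
  "right_insert x B a = ins_cols x a B"

definition RR :: "side \<Rightarrow> nat list \<Rightarrow> tableau" where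
  "RR x w = foldl (right_insert x) [] w"

text \<open>Decreasing subsequence, on a word given as a list of (position, letter) pairs.
 dseq_from x v p: the subsequence starting with v, followed by the elements of p
 chosen greedily: the next chosen one is the first to the right that is rel-below
 the current one.\<close>
fun dseq_from :: "side \<Rightarrow> nat \<times> nat \<Rightarrow> (nat \<times> nat) list \<Rightarrow> (nat \<times> nat) list" where
  "dseq_from x v [] = [v]"
| "dseq_from x v (u # us) =
     (if rel x (snd u) (snd v) then v # dseq_from x u us else dseq_from x v us)"

fun dseq :: "side \<Rightarrow> (nat \<times> nat) list \<Rightarrow> (nat \<times> nat) list" where
  "dseq x [] = []"
| "dseq x (v # vs) = dseq_from x v vs"

function lrmin :: "side \<Rightarrow> (nat \<times> nat) list \<Rightarrow> nat list list" where
  "lrmin x ps = (if ps = [] then []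
     else map snd (dseq x ps) #
          lrmin x (filter (\<lambda>p. p \<notin> set (dseq x ps)) ps))"
  by pat_completeness auto
lemma dseq_hd: "ps \<noteq> [] \<Longrightarrow> hd ps \<in> set (dseq x ps)"
proof -
  have "v \<in> set (dseq_from x v us)" for v us by (induction us arbitrary: v) auto
  then show "ps \<noteq> [] \<Longrightarrow> hd ps \<in> set (dseq x ps)" by (cases ps) auto
qed

termination
proof (relation "measure (\<lambda>(x, ps). length ps)")
  fix x :: side and ps :: "(nat \<times> nat) list"
  assume "ps \<noteq> []"
  then have "hd ps \<in> set (dseq x ps)" by (rule dseq_hd)
  then show "((x, filter (\<lambda>p. p \<notin> set (dseq x ps)) ps), x, ps) \<in> measure (\<lambda>(x, ps). length ps)"
    using \<open>ps \<noteq> []\<close> by (cases ps) (auto intro: le_less_trans[OF length_filter_le])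
qed auto

definition occs :: "nat list \<Rightarrow> (nat \<times> nat) list" where
  "occs w = zip [0..<length w] w"

definition lr_minimal_subsequence :: "side \<Rightarrow> nat list \<Rightarrow> nat list list" where
  "lr_minimal_subsequence x w = lrmin x (occs w)"


end

theory Submission
  imports Defs
begin

text \<open>Right-inserting the letters of a word, the first letter opens the first column, and a
 later letter lands in that column exactly when it is rel-below the current bottom entry,
 i.e. exactly when the greedy decreasing subsequence picks it. All other letters pass
 through the first column untouched, so the remaining columns are the tableau of the word
 with the decreasing subsequence deleted, and induction on the length of the word
 identifies the columns with the successive decreasing subsequences.\<close>

lemma dseq_from_hd: "\<exists>t. dseq_from x v us = v # t"
  by (induction us arbitrary: v) auto

lemma set_dseq_from_subset: "set (dseq_from x v us) \<subseteq> insert v (set us)"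
  by (induction us arbitrary: v) auto

text \<open>Distinctness of the occurrences is what makes deleting the subsequence by membership
 delete exactly the chosen occurrences.\<close>

lemma foldl_right_insert_first_column:
  assumes "distinct (v # us)" and "last c = snd v"
  shows "foldl (right_insert x) (c # cs) (map snd us) =
    (c @ tl (map snd (dseq_from x v us))) #
     foldl (right_insert x) cs (map snd (filter (\<lambda>p. p \<notin> set (dseq_from x v us)) us))"
  using assms
proof (induction us arbitrary: v c cs)
  case Nil
  then show ?case by simp
next
  case (Cons u us)
  show ?case
  proof (cases "rel x (snd u) (snd v)")
    case True
    obtain t where t: "dseq_from x u us = u # t" using dseq_from_hd by blast
    have distinct: "distinct (u # us)" using Cons.prems by auto
    have filter_eq: "filter (\<lambda>p. p \<notin> set (v # dseq_from x u us)) us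
           = filter (\<lambda>p. p \<notin> set (dseq_from x u us)) us"
      using Cons.prems by (intro filter_cong) auto
    have "foldl (right_insert x) (c # cs) (map snd (u # us))
        = foldl (right_insert x) ((c @ [snd u]) # cs) (map snd us)"
      using True Cons.prems by (simp add: right_insert_def)
    also have "\<dots> = ((c @ [snd u]) @ tl (map snd (dseq_from x u us))) #
       foldl (right_insert x) cs (map snd (filter (\<lambda>p. p \<notin> set (dseq_from x u us)) us))"
      using Cons.IH[OF distinct] by simp
    finally show ?thesis using True t filter_eq by simp
  next
    case False
    let ?rest = "filter (\<lambda>p. p \<notin> set (dseq_from x v us)) us"
    have distinct: "distinct (v # us)" using Cons.prems by auto
    have u_skipped: "u \<notin> set (dseq_from x v us)"
      using set_dseq_from_subset[of x v us] Cons.prems by auto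
    have "foldl (right_insert x) (c # cs) (map snd (u # us))
        = foldl (right_insert x) (c # ins_cols x (snd u) cs) (map snd us)"
      using False Cons.prems by (simp add: right_insert_def)
    also have "\<dots> = (c @ tl (map snd (dseq_from x v us))) #
       foldl (right_insert x) (ins_cols x (snd u) cs) (map snd ?rest)"
      using Cons.IH[OF distinct Cons.prems(2)] by simp
    also have "foldl (right_insert x) (ins_cols x (snd u) cs) (map snd ?rest)
       = foldl (right_insert x) cs
           (map snd (filter (\<lambda>p. p \<notin> set (dseq_from x v (u # us))) (u # us)))"
      using u_skipped False by (simp add: right_insert_def)
    finally show ?thesis using False by simp
  qed
qed

lemma lrmin_eq_RR: "distinct ps \<Longrightarrow> lrmin x ps = RR x (map snd ps)"
proof (induction x ps rule: lrmin.induct)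
  case (1 x ps)
  show ?case
  proof (cases ps)
    case Nil
    then show ?thesis by (simp add: RR_def)
  next
    case (Cons v vs)
    let ?rest = "filter (\<lambda>p. p \<notin> set (dseq x ps)) ps"
    obtain t where t: "dseq_from x v vs = v # t" using dseq_from_hd by blast
    have rest_eq: "?rest = filter (\<lambda>p. p \<notin> set (dseq_from x v vs)) vs"
      using Cons t by simp
    have "RR x (map snd ps) = foldl (right_insert x) [[snd v]] (map snd vs)"
      using Cons by (simp add: RR_def right_insert_def)
    also have "\<dots> = map snd (dseq x ps) # RR x (map snd ?rest)"
      using foldl_right_insert_first_column[of v vs "[snd v]" x "[]"] "1.prems" Cons t rest_eq
      by (simp add: RR_def)
    also have "\<dots> = lrmin x ps"
      using "1.IH" "1.prems" Cons by simp
    finally show ?thesis by simp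
  qed
qed

theorem proposition3p12:
  fixes x :: side and w :: "nat list"
  assumes "\<forall>a \<in> set w. 1 \<le> a"
  shows "length (lr_minimal_subsequence x w) = length (RR x w) \<and>
         (\<forall>i < length (lr_minimal_subsequence x w).
             lr_minimal_subsequence x w ! i = RR x w ! i)"
proof -
  have "lr_minimal_subsequence x w = RR x w"
    unfolding lr_minimal_subsequence_def occs_def
    using lrmin_eq_RR[of "zip [0..<length w] w" x] by (simp add: distinct_zipI1)
  then show ?thesis by simp
qed

end
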